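(* Let $n\ge2$, $\mathbf{q}\in\mathbb{R}^n$ and $1/n<t<1$. For $z\in\mathbb{R}$ let $\mathbf{v}(z)\in\mathbb{R}^n$ have entries $\mathbf{v}_i(z)=\max(0,\mathbf{q}_i-z)$ and let $$h(z)=\begin{cases}\sqrt t\,\|\mathbf{v}(z)\|_2+z & \text{if } z<\max_i\mathbf{q}_i,\\ z & \text{otherwise.}\end{cases}$$ Then $h$ is convex, attains its minimum on $\mathbb{R}$, and $$\max_{\mathbf{p}\in P(t)}\mathbf{p}\cdot\mathbf{q}=\min_{z\in\mathbb{R}}h(z).$$ Moreover, if $z^*$ is a minimizer of $h$ with $z^*<\max_i\mathbf{q}_i$, then $\mathbf{p}^*=\sqrt t\,\mathbf{v}(z^* )/\|\mathbf{v}(z^* )\|_2$ is a maximizer of $\mathbf{p}\cdot\mathbf{q}$ over $P(t)$; if $z^*=\max_i\mathbf{q}_i$ is a minimizer, then the vector $\mathbf{p}^*$ with $\mathbf{p}^*_i=1/|S|$ for $i\in S=\{i:\mathbf{q}_i=\max_j\mathbf{q}_j\}$ and $\mathbf{p}^*_i=0$ otherwise is a maximizer.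
   Context: $P(t)=\{\mathbf{p}\in\mathbb{R}^n:\mathbf{p}\ge0,\ \sum_i\mathbf{p}_i=1,\ \mathbf{p}\cdot\mathbf{p}\le t\}$. *)

theory Defs
  imports "HOL-Analysis.Analysis"
begin

definition Pset :: "real \<Rightarrow> (real ^ 'n) set" where
  "Pset t = {p. (\<forall>i. p $ i \<ge> 0) \<and> (\<Sum>i\<in>UNIV. p $ i) = 1 \<and> p \<bullet> p \<le> t}"

definition qmax :: "real ^ 'n \<Rightarrow> real" where
  "qmax q = Max (range (\<lambda>i. q $ i))"

definition vvec :: "real ^ 'n \<Rightarrow> real \<Rightarrow> real ^ 'n" where
  "vvec q z = (\<chi> i. max 0 (q $ i - z))"

definition hfun :: "real \<Rightarrow> real ^ 'n \<Rightarrow> real \<Rightarrow> real" where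
  "hfun t q z = (if z < qmax q then sqrt t * norm (vvec q z) + z else z)"

definition is_maximizer :: "real \<Rightarrow> real ^ 'n \<Rightarrow> real ^ 'n \<Rightarrow> bool" where
  "is_maximizer t q p \<longleftrightarrow> p \<in> Pset t \<and> (\<forall>p'\<in>Pset t. p' \<bullet> q \<le> p \<bullet> q)"

end

theory Submission
  imports Defs
begin

(* Weak duality: for p in P(t) and any z, Cauchy-Schwarz gives
   p.q = sum_i p_i (q_i - z) + z <= p.v(z) + z <= sqrt t |v(z)| + z = h(z).
   The function h is convex, equals z to the right of max q, and to the left it is bounded below by
   a linear function of slope -(sqrt(t n) - 1) < 0, so it attains its minimum at some z0.  If z0 < max q, then h is
   differentiable at z0, and h'(z0) = 0 reads sqrt t * sum_i v_i(z0) = |v(z0)|: exactly the condition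
   making sqrt t v(z0) / |v(z0)| a probability vector, and this vector attains h(z0).  If z0 = max q,
   comparing with h slightly below max q gives t |S| >= 1, so the uniform distribution on S lies in
   P(t) and attains max q = h(max q). *)

lemma le_qmax: "q $ i \<le> qmax q"
  unfolding qmax_def by (rule Max_ge) auto

lemma qmax_attained:
  obtains i where "q $ i = qmax q"
proof -
  have "qmax q \<in> range (\<lambda>i. q $ i)"
    unfolding qmax_def by (rule Max_in) auto
  then show thesis
    using that by (metis rangeE)
qed

lemma vvec_nth [simp]: "vvec q z $ i = max 0 (q $ i - z)"
  by (simp add: vvec_def)

lemma vvec_eq_0_iff: "vvec q z = 0 \<longleftrightarrow> qmax q \<le> z"
proof
  obtain i where "q $ i = qmax q" by (rule qmax_attained)
  then show "vvec q z = 0 \<Longrightarrow> qmax q \<le> z"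
    by (auto simp: vec_eq_iff dest: spec[of _ i])
  show "vvec q z = 0" if "qmax q \<le> z"
    using order_trans[OF le_qmax that] by (simp add: vec_eq_iff)
qed

lemma hfun_eq: "hfun t q z = sqrt t * norm (vvec q z) + z"
  using vvec_eq_0_iff[of q z] by (auto simp: hfun_def)

lemma hfun_qmax: "hfun t q (qmax q) = qmax q"
  by (simp add: hfun_def)

lemma inner_vvec: "vvec q z \<bullet> q = vvec q z \<bullet> vvec q z + z * (\<Sum>i\<in>UNIV. vvec q z $ i)"
  unfolding inner_vec_def sum_distrib_left sum.distrib[symmetric]
  by (rule sum.cong) (auto simp: max_def algebra_simps)

lemma inner_le_hfun:
  assumes "p \<in> Pset t"
  shows "p \<bullet> q \<le> hfun t q z"
proof -
  have p_nonneg: "\<And>i. 0 \<le> p $ i" and p_sum: "(\<Sum>i\<in>UNIV. p $ i) = 1"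
    and p_norm: "p \<bullet> p \<le> t"
    using assms unfolding Pset_def by auto
  have "p \<bullet> q = (\<Sum>i\<in>UNIV. p $ i * (q $ i - z)) + z"
    using p_sum by (simp add: inner_vec_def algebra_simps sum_subtractf flip: sum_distrib_left)
  also have "\<dots> \<le> p \<bullet> vvec q z + z"
    unfolding inner_vec_def using p_nonneg by (auto intro!: sum_mono mult_left_mono)
  also have "\<dots> \<le> norm p * norm (vvec q z) + z"
    using norm_cauchy_schwarz by simp
  also have "\<dots> \<le> sqrt t * norm (vvec q z) + z"
    using p_norm by (simp add: norm_eq_sqrt_inner mult_right_mono)
  finally show ?thesis
    by (simp add: hfun_eq)
qed

lemma is_maximizer_if_attains_hfun:
  assumes "p \<in> Pset t" and "p \<bullet> q = hfun t q z"
  shows "is_maximizer t q p"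
  using assms inner_le_hfun unfolding is_maximizer_def by metis

lemma convex_on_norm_vvec: "convex_on UNIV (\<lambda>z. norm (vvec q z))"
  unfolding convex_on_def
proof (intro conjI ballI allI impI)
  fix x y u v :: real
  assume uv: "0 \<le> u" "0 \<le> v" "u + v = 1"
  have "norm (vvec q (u *\<^sub>R x + v *\<^sub>R y)) \<le> norm (u *\<^sub>R vvec q x + v *\<^sub>R vvec q y)"
  proof (rule norm_le_componentwise_cart)
    fix i
    have "q $ i - (u * x + v * y) = u * (q $ i - x) + v * (q $ i - y)"
      using uv(3) by (simp add: algebra_simps flip: distrib_right)
    moreover have "u * (q $ i - x) \<le> u * max 0 (q $ i - x)" "v * (q $ i - y) \<le> v * max 0 (q $ i - y)"
      using uv by (simp_all add: mult_left_mono)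
    ultimately show "norm (vvec q (u *\<^sub>R x + v *\<^sub>R y) $ i) \<le> norm ((u *\<^sub>R vvec q x + v *\<^sub>R vvec q y) $ i)"
      using uv by simp
  qed
  also have "\<dots> \<le> u * norm (vvec q x) + v * norm (vvec q y)"
    using uv by (metis abs_of_nonneg norm_scaleR norm_triangle_ineq)
  finally show "norm (vvec q (u *\<^sub>R x + v *\<^sub>R y)) \<le> u * norm (vvec q x) + v * norm (vvec q y)" .
qed simp

lemma convex_on_hfun:
  assumes "0 \<le> t"
  shows "convex_on UNIV (hfun t q)"
proof -
  have "convex_on UNIV (\<lambda>z. sqrt t * norm (vvec q z) + z)"
    using assms by (intro convex_on_add convex_on_cmul convex_on_norm_vvec) (auto simp: convex_on_def)
  then show ?thesis
    by (simp add: hfun_eq[abs_def])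
qed

lemma sum_le_sqrt_card_mult_norm:
  fixes x :: "real ^ 'n"
  shows "(\<Sum>i\<in>UNIV. x $ i) \<le> sqrt (real CARD('n)) * norm x"
proof -
  let ?one = "\<chi> i. 1 :: real ^ 'n"
  have "(\<Sum>i\<in>UNIV. x $ i) = ?one \<bullet> x"
    by (simp add: inner_vec_def)
  also have "\<dots> \<le> norm ?one * norm x"
    by (rule norm_cauchy_schwarz)
  also have "norm ?one = sqrt (real CARD('n))"
    by (simp add: norm_vec_def L2_set_def)
  finally show ?thesis .
qed

lemma hfun_ge_linear:
  fixes q :: "real ^ 'n"
  assumes "0 \<le> t"
  shows "sqrt t * (\<Sum>i\<in>UNIV. q $ i) / sqrt CARD('n) - (sqrt (t * CARD('n)) - 1) * z \<le> hfun t q z"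
proof -
  let ?n = "real CARD('n)"
  have "(\<Sum>i\<in>UNIV. q $ i) - ?n * z = (\<Sum>i\<in>UNIV. q $ i - z)"
    by (simp add: sum_subtractf)
  also have "\<dots> \<le> (\<Sum>i\<in>UNIV. vvec q z $ i)"
    by (intro sum_mono) simp
  also have "\<dots> \<le> sqrt ?n * norm (vvec q z)"
    by (rule sum_le_sqrt_card_mult_norm)
  finally have "sqrt t * ((\<Sum>i\<in>UNIV. q $ i) - ?n * z) \<le> sqrt t * (sqrt ?n * norm (vvec q z))"
    using assms by (intro mult_left_mono) auto
  then show ?thesis
    by (simp add: hfun_eq real_sqrt_mult field_simps)
qed

lemma hfun_attains_min:
  fixes q :: "real ^ 'n" and t :: real
  assumes "1 < t * CARD('n)"
  obtains z where "\<forall>y. hfun t q z \<le> hfun t q y"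
proof -
  define A where "A = sqrt t * (\<Sum>i\<in>UNIV. q $ i) / sqrt CARD('n)"
  define c where "c = sqrt (t * CARD('n)) - 1"
  have "0 < t * CARD('n)"
    using assms by linarith
  then have "0 \<le> t"
    by (simp add: zero_less_mult_iff)
  have "0 < c"
    using assms by (simp add: c_def)
  \<comment> \<open>left of \<open>a\<close> the linear lower bound already exceeds \<open>hfun t q (qmax q) = qmax q\<close>\<close>
  define a where "a = min (qmax q) ((A - qmax q) / c)"
  have "continuous_on {a..qmax q} (hfun t q)"
    unfolding hfun_eq[abs_def] vvec_def by (intro continuous_intros)
  moreover have "a \<le> qmax q"
    by (simp add: a_def)
  ultimately obtain x where x: "\<forall>y\<in>{a..qmax q}. hfun t q x \<le> hfun t q y"
    using continuous_attains_inf[OF compact_Icc, of a "qmax q" "hfun t q"] by auto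
  have x_le: "hfun t q x \<le> qmax q"
    using x[rule_format, of "qmax q"] \<open>a \<le> qmax q\<close> by (simp add: hfun_qmax)
  have "hfun t q x \<le> hfun t q y" for y
  proof (cases y a rule: linorder_cases)
    case less
    then have "c * y < A - qmax q"
      using \<open>0 < c\<close> by (simp add: a_def pos_less_divide_eq mult.commute)
    then show ?thesis
      using x_le hfun_ge_linear[OF \<open>0 \<le> t\<close>, of q y] by (simp add: A_def c_def)
  next
    case equal
    then show ?thesis
      using x \<open>a \<le> qmax q\<close> by simp
  next
    case greater
    show ?thesis
    proof (cases "y \<le> qmax q")
      case True
      then show ?thesis
        using x greater by simp
    next
      case False
      then show ?thesis
        using x_le by (simp add: hfun_def)
    qed
  qed
  then show thesis
    using that by blast
qed

lemma has_field_derivative_max0_sq: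
  "((\<lambda>x::real. (max 0 x)\<^sup>2) has_field_derivative 2 * max 0 x) (at x)"
proof (cases x "0::real" rule: linorder_cases)
  case less
  have "((\<lambda>x::real. 0) has_field_derivative 2 * max 0 x) (at x)"
    using less by simp
  then show ?thesis
    by (rule has_field_derivative_transform_within_open[where S = "{..<0}"]) (use less in auto)
next
  case equal
  have "\<forall>\<^sub>F h in at (0::real). ((max 0 (0 + h))\<^sup>2 - (max 0 0)\<^sup>2) / h = max 0 h"
    unfolding eventually_at_filter by (auto simp: max_def power2_eq_square)
  moreover have "((\<lambda>h::real. max 0 h) \<longlongrightarrow> 0) (at 0)"
    using tendsto_max[OF tendsto_const tendsto_ident_at, of 0 0 UNIV] by simp
  ultimately show ?thesis
    using equal by (simp add: DERIV_def tendsto_cong)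
next
  case greater
  have "((\<lambda>x::real. x\<^sup>2) has_field_derivative 2 * max 0 x) (at x)"
    using greater by (auto intro!: derivative_eq_intros)
  then show ?thesis
    by (rule has_field_derivative_transform_within_open[where S = "{0<..}"]) (use greater in auto)
qed

lemma has_field_derivative_norm_vvec:
  assumes "z < qmax q"
  shows "((\<lambda>z. norm (vvec q z)) has_field_derivative
           - (\<Sum>i\<in>UNIV. vvec q z $ i) / norm (vvec q z)) (at z)"
proof -
  have norm_sq: "(norm (vvec q y))\<^sup>2 = (\<Sum>i\<in>UNIV. (max 0 (q $ i - y))\<^sup>2)" for y
    unfolding power2_norm_eq_inner by (simp add: inner_vec_def power2_eq_square)
  have "((\<lambda>y. (max 0 (q $ i - y))\<^sup>2) has_field_derivative 2 * max 0 (q $ i - z) * (0 - 1)) (at z)"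
    for i by (rule DERIV_chain2[OF has_field_derivative_max0_sq DERIV_diff[OF DERIV_const DERIV_ident]])
  then have "((\<lambda>y. \<Sum>i\<in>UNIV. (max 0 (q $ i - y))\<^sup>2) has_field_derivative
          (\<Sum>i\<in>UNIV. 2 * max 0 (q $ i - z) * (0 - 1))) (at z)"
    by (rule DERIV_sum)
  then have deriv_sq: "((\<lambda>y. (norm (vvec q y))\<^sup>2) has_field_derivative
      - 2 * (\<Sum>i\<in>UNIV. vvec q z $ i)) (at z)"
    by (simp add: norm_sq sum_negf sum_distrib_left)
  have "0 < (norm (vvec q z))\<^sup>2"
    using assms vvec_eq_0_iff[of q z] by simp
  from DERIV_chain2[OF DERIV_real_sqrt[OF this] deriv_sq]
  have "((\<lambda>y. norm (vvec q y)) has_field_derivative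
      inverse (norm (vvec q z)) / 2 * (- 2 * (\<Sum>i\<in>UNIV. vvec q z $ i))) (at z)"
    by (simp only: real_sqrt_abs abs_norm_cancel)
  then show ?thesis
    by (simp add: field_simps)
qed

lemma hfun_min_stationary:
  assumes min: "\<forall>y. hfun t q z \<le> hfun t q y" and "z < qmax q"
  shows "sqrt t * (\<Sum>i\<in>UNIV. vvec q z $ i) = norm (vvec q z)"
proof -
  have "(hfun t q has_field_derivative
          sqrt t * (- (\<Sum>i\<in>UNIV. vvec q z $ i) / norm (vvec q z)) + 1) (at z)"
    unfolding hfun_eq[abs_def]
    by (rule DERIV_add[OF DERIV_cmult[OF has_field_derivative_norm_vvec[OF assms(2)]] DERIV_ident])
  then have "sqrt t * (- (\<Sum>i\<in>UNIV. vvec q z $ i) / norm (vvec q z)) + 1 = 0"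
    by (rule DERIV_local_min[of _ _ _ 1]) (use min in auto)
  moreover have "norm (vvec q z) \<noteq> 0"
    using assms(2) vvec_eq_0_iff[of q z] by simp
  ultimately show ?thesis
    by (simp add: field_simps)
qed

lemma scaled_vvec_attains_hfun:
  assumes stationary: "sqrt t * (\<Sum>i\<in>UNIV. vvec q z $ i) = norm (vvec q z)"
    and "z < qmax q"
  defines "p \<equiv> (sqrt t / norm (vvec q z)) *\<^sub>R vvec q z"
  shows "p \<in> Pset t \<and> p \<bullet> q = hfun t q z"
proof -
  let ?v = "vvec q z" and ?S = "\<Sum>i\<in>UNIV. vvec q z $ i"
  have "0 < norm ?v"
    using \<open>z < qmax q\<close> vvec_eq_0_iff[of q z] by simp
  moreover have "0 \<le> ?S"
    by (simp add: sum_nonneg)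
  ultimately have "0 < sqrt t"
    using stationary by (metis zero_less_mult_iff not_le)
  have "(\<Sum>i\<in>UNIV. p $ i) = sqrt t * ?S / norm ?v"
    by (simp add: p_def sum_distrib_left sum_divide_distrib)
  also have "\<dots> = 1"
    using stationary \<open>0 < norm ?v\<close> by simp
  finally have sum_p: "(\<Sum>i\<in>UNIV. p $ i) = 1" .
  have "p \<bullet> p = (sqrt t / norm ?v)\<^sup>2 * (norm ?v)\<^sup>2"
    by (simp add: p_def dot_square_norm power2_eq_square)
  also have "\<dots> = t"
    using \<open>0 < sqrt t\<close> \<open>0 < norm ?v\<close> by (simp add: power_divide)
  finally have "p \<bullet> p = t" .
  with sum_p \<open>0 < sqrt t\<close> have "p \<in> Pset t"
    by (simp add: Pset_def p_def)
  have "p \<bullet> q = sqrt t / norm ?v * ((norm ?v)\<^sup>2 + z * ?S)"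
    by (simp add: p_def inner_vvec dot_square_norm)
  also have "\<dots> = hfun t q z"
    using stationary \<open>0 < norm ?v\<close> by (simp add: hfun_eq field_simps power2_eq_square)
  finally show ?thesis
    using \<open>p \<in> Pset t\<close> by simp
qed

lemma exists_between_qmax_and_smaller_entries:
  obtains z where "z < qmax q" and "\<And>i. q $ i \<noteq> qmax q \<Longrightarrow> q $ i \<le> z"
proof
  \<comment> \<open>\<open>qmax q - 1\<close> keeps the set nonempty when all entries are equal\<close>
  let ?below = "insert (qmax q - 1) {q $ i |i. q $ i \<noteq> qmax q}"
  have "finite ?below"
    by simp
  moreover have "\<forall>x\<in>?below. x < qmax q"
    using le_qmax[of q] by (auto simp: order.strict_iff_order)
  ultimately show "Max ?below < qmax q"
    by simp
  show "q $ i \<le> Max ?below" if "q $ i \<noteq> qmax q" for i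
    using \<open>finite ?below\<close> that by (intro Max_ge) auto
qed

lemma sum_if_const_else_0:
  fixes c :: real
  shows "(\<Sum>i\<in>(UNIV :: 'n::finite set). if P i then c else 0) = real (card {i. P i}) * c"
  by (simp add: sum.If_cases)

lemma norm_vvec_near_qmax:
  assumes "z \<le> qmax q" and "\<And>i. q $ i \<noteq> qmax q \<Longrightarrow> q $ i \<le> z"
  shows "norm (vvec q z) = sqrt (card {i. q $ i = qmax q}) * (qmax q - z)"
proof -
  have "vvec q z $ i * vvec q z $ i = (if q $ i = qmax q then (qmax q - z)\<^sup>2 else 0)" for i
    using assms by (auto simp: power2_eq_square)
  then have "(norm (vvec q z))\<^sup>2 = card {i. q $ i = qmax q} * (qmax q - z)\<^sup>2"
    by (simp add: power2_norm_eq_inner inner_vec_def sum_if_const_else_0)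
  then show ?thesis
    using assms(1) by (metis real_sqrt_mult real_sqrt_abs real_sqrt_unique norm_ge_zero abs_of_nonneg diff_ge_0_iff_ge)
qed

lemma qmax_minimizer_imp_card_argmax_ge:
  assumes min: "\<forall>y. hfun t q (qmax q) \<le> hfun t q y"
  shows "1 \<le> t * card {i. q $ i = qmax q}"
proof -
  let ?k = "real (card {i. q $ i = qmax q})"
  obtain z where "z < qmax q" and below: "\<And>i. q $ i \<noteq> qmax q \<Longrightarrow> q $ i \<le> z"
    using exists_between_qmax_and_smaller_entries[of q] by blast
  have "qmax q \<le> sqrt t * (sqrt ?k * (qmax q - z)) + z"
    using min[rule_format, of z] \<open>z < qmax q\<close> below
    unfolding hfun_qmax by (simp add: hfun_eq norm_vvec_near_qmax)
  then have "1 * (qmax q - z) \<le> sqrt (t * ?k) * (qmax q - z)"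
    by (simp add: real_sqrt_mult algebra_simps)
  then have "1 \<le> sqrt (t * ?k)"
    using \<open>z < qmax q\<close> by (simp only: mult_le_cancel_right_pos diff_gt_0_iff_gt)
  then show ?thesis
    by simp
qed

lemma uniform_argmax_attains_hfun:
  fixes t :: real
  assumes "1 \<le> t * card {i. q $ i = qmax q}"
  defines "u \<equiv> \<chi> i. if q $ i = qmax q then 1 / real (card {j. q $ j = qmax q}) else 0"
  shows "u \<in> Pset t \<and> u \<bullet> q = hfun t q (qmax q)"
proof -
  let ?k = "real (card {i. q $ i = qmax q})"
  obtain i where i: "q $ i = qmax q" by (rule qmax_attained)
  then have "0 < ?k"
    by (auto simp: card_gt_0_iff)
  have "(\<Sum>i\<in>UNIV. u $ i) = 1"
    using \<open>0 < ?k\<close> i by (auto simp: u_def sum_if_const_else_0)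
  moreover have "u \<bullet> u \<le> t"
  proof -
    have "u \<bullet> u = ?k * (1 / ?k)\<^sup>2"
      unfolding inner_vec_def u_def by (simp add: if_distrib power2_eq_square sum_if_const_else_0 cong: if_cong)
    also have "\<dots> = 1 / ?k"
      using \<open>0 < ?k\<close> by (simp add: power2_eq_square)
    finally show ?thesis
      using assms(1) \<open>0 < ?k\<close> by (simp add: field_simps)
  qed
  ultimately have "u \<in> Pset t"
    by (simp add: Pset_def u_def)
  have "u $ i * q $ i = (if q $ i = qmax q then qmax q / ?k else 0)" for i
    by (simp add: u_def)
  then have "u \<bullet> q = ?k * (qmax q / ?k)"
    by (simp add: inner_vec_def sum_if_const_else_0)
  then have "u \<bullet> q = hfun t q (qmax q)"
    using \<open>0 < ?k\<close> i by (auto simp: hfun_qmax)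
  with \<open>u \<in> Pset t\<close> show ?thesis
    by simp
qed

lemma is_maximizer_scaled_vvec:
  assumes "\<forall>y. hfun t q z \<le> hfun t q y" and "z < qmax q"
  shows "is_maximizer t q ((sqrt t / norm (vvec q z)) *\<^sub>R vvec q z)"
  using scaled_vvec_attains_hfun[OF hfun_min_stationary[OF assms] assms(2)]
  by (blast intro: is_maximizer_if_attains_hfun)

lemma is_maximizer_uniform_argmax:
  assumes "\<forall>y. hfun t q (qmax q) \<le> hfun t q y"
  shows "is_maximizer t q (\<chi> i. if q $ i = qmax q then 1 / real (card {j. q $ j = qmax q}) else 0)"
  using uniform_argmax_attains_hfun[OF qmax_minimizer_imp_card_argmax_ge[OF assms]]
  by (blast intro: is_maximizer_if_attains_hfun)

lemma hfun_min_attained_in_Pset: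
  assumes min: "\<forall>y. hfun t q z \<le> hfun t q y"
  obtains p where "p \<in> Pset t" and "p \<bullet> q = hfun t q z"
proof (cases "z < qmax q")
  case True
  then show thesis
    using that scaled_vvec_attains_hfun[OF hfun_min_stationary[OF min True] True] by blast
next
  case False
  with min[rule_format, of "qmax q"] have "z = qmax q"
    by (simp add: hfun_def)
  then show thesis
    using that min uniform_argmax_attains_hfun[OF qmax_minimizer_imp_card_argmax_ge] by blast
qed

theorem mainTheorem11:
  fixes q :: "real ^ 'n" and t :: real
  assumes "CARD('n) \<ge> 2"
    and "1 / real CARD('n) < t" and "t < 1"
  shows "convex_on UNIV (hfun t q)
    \<and> (\<exists>z. \<forall>y. hfun t q z \<le> hfun t q y)
    \<and> (\<exists>p\<in>Pset t. \<forall>p'\<in>Pset t. p' \<bullet> q \<le> p \<bullet> q)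
    \<and> (SUP p\<in>Pset t. p \<bullet> q) = (INF z. hfun t q z)
    \<and> (\<forall>zs. (\<forall>y. hfun t q zs \<le> hfun t q y) \<and> zs < qmax q \<longrightarrow>
          is_maximizer t q (scaleR (sqrt t / norm (vvec q zs)) (vvec q zs)))
    \<and> ((\<forall>y. hfun t q (qmax q) \<le> hfun t q y) \<longrightarrow>
          is_maximizer t q (\<chi> i. if q $ i = qmax q
              then 1 / real (card {j. q $ j = qmax q}) else 0))"
proof -
  \<comment> \<open>only \<open>1 / n < t\<close> is needed\<close>
  have "1 < t * CARD('n)"
    using assms(2) by (simp add: field_simps)
  then have "0 < t * CARD('n)"
    by linarith
  then have "0 \<le> t"
    by (simp add: zero_less_mult_iff)
  obtain zm where zm: "\<forall>y. hfun t q zm \<le> hfun t q y"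
    using hfun_attains_min \<open>1 < t * CARD('n)\<close> by blast
  then obtain p where "p \<in> Pset t" and p_value: "p \<bullet> q = hfun t q zm"
    by (rule hfun_min_attained_in_Pset)
  then have max_p: "is_maximizer t q p"
    by (rule is_maximizer_if_attains_hfun)
  have "(SUP p\<in>Pset t. p \<bullet> q) = p \<bullet> q"
    using max_p unfolding is_maximizer_def by (intro cSup_eq_maximum) auto
  also have "\<dots> = (INF z. hfun t q z)"
    using zm p_value by (intro cInf_eq_minimum[symmetric]) auto
  finally show ?thesis
    using convex_on_hfun[OF \<open>0 \<le> t\<close>] zm max_p
      is_maximizer_scaled_vvec[of t q] is_maximizer_uniform_argmax[of t q]
    unfolding is_maximizer_def by blast
qed

end
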